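(* There exist an environment $E$ and a total preorder $\succeq$ on $\Pi^E$ such that $\succeq\in\mathrm{Ord}_{\mathrm{FPR}}(E)$ but $\succeq\notin\mathrm{Ord}_{\mathrm{GOMORL}}(E)$.
   Context: An environment is a tuple $E=(\mathcal S,\mathcal A,\mathcal T,\mathcal I)$ where $\mathcal S,\mathcal A$ are finite nonempty sets, $\mathcal T:\mathcal S\times\mathcal A\to\Delta(\mathcal S)$ and $\mathcal I\in\Delta(\mathcal S)$. A policy is a map $\pi:\mathcal S\to\Delta(\mathcal A)$ (stationary, possibly stochastic); $\Pi^E$ denotes the set of all policies. A trajectory $\xi=(s_0,a_0,s_1,a_1,\dots)$ is generated under $\pi$ by $s_0\sim\mathcal I$, $a_t\sim\pi(s_t)$, $s_{t+1}\sim\mathcal T(s_t,a_t)$; $\mathbb E^\pi_\xi$ denotes expectation under this distribution. An objective-specification formalism $X$ assigns to each environment $E$ a set of objective specifications, each inducing a total preorder $\succeq$ on $\Pi^E$; $\mathrm{Ord}_X(E)$ is the set of total preorders so induced. A specification defining a scalar $J:\Pi^E\to\mathbb R$ induces $\pi_1\succeq\pi_2\iff J(\pi_1)\ge J(\pi_2)$. FPR: specification $(J)$ with $J:\Pi^E\to\mathbb R$ an arbitrary function. GOMORL: specification $(k,\mathcal R,\gamma,\succeq_J)$ with $k\in\mathbb N$, $\mathcal R:\mathcal S\times\mathcal A\times\mathcal S\to\mathbb R^k$ with components $\mathcal R_i$, $\gamma\in[0,1)$, $\succeq_J$ a total preorder on $\mathbb R^k$; with $\vec J(\pi)=(J_1(\pi),\dots,J_k(\pi))$,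 $J_i(\pi)=\mathbb E^\pi_\xi[\sum_{t=0}^\infty\gamma^t\mathcal R_i(s_t,a_t,s_{t+1})]$, it induces $\pi_1\succeq\pi_2\iff\vec J(\pi_1)\succeq_J\vec J(\pi_2)$. *)

theory Defs
  imports "HOL-Probability.Probability"
begin

definition is_env :: "nat set \<Rightarrow> nat set \<Rightarrow> (nat \<Rightarrow> nat \<Rightarrow> nat pmf) \<Rightarrow> nat pmf \<Rightarrow> bool" where
  "is_env S A T I \<longleftrightarrow> finite S \<and> S \<noteq> {} \<and> finite A \<and> A \<noteq> {} \<and>
     set_pmf I \<subseteq> S \<and> (\<forall>s\<in>S. \<forall>a\<in>A. set_pmf (T s a) \<subseteq> S)"

(* Pi^E: stationary stochastic policies S -> Delta(A); values outside S are
   fixed to undefined so that policies correspond exactly to maps on S. *)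
definition policies :: "nat set \<Rightarrow> nat set \<Rightarrow> (nat \<Rightarrow> nat pmf) set" where
  "policies S A = {\<pi>. (\<forall>s\<in>S. set_pmf (\<pi> s) \<subseteq> A) \<and> (\<forall>s. s \<notin> S \<longrightarrow> \<pi> s = undefined)}"

(* distribution of the length-n trajectory prefix: list of transitions
   (s_t, a_t, s_{t+1}) for t < n, together with the current state s_n *)
fun traj :: "(nat \<Rightarrow> nat \<Rightarrow> nat pmf) \<Rightarrow> nat pmf \<Rightarrow> (nat \<Rightarrow> nat pmf) \<Rightarrow> nat
              \<Rightarrow> ((nat \<times> nat \<times> nat) list \<times> nat) pmf" where
  "traj T I \<pi> 0 = map_pmf (\<lambda>s. ([], s)) I"
| "traj T I \<pi> (Suc n) = bind_pmf (traj T I \<pi> n) (\<lambda>(h, s).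
      bind_pmf (\<pi> s) (\<lambda>a. map_pmf (\<lambda>s'. (h @ [(s, a, s')], s')) (T s a)))"

definition disc_sum :: "real \<Rightarrow> (nat \<Rightarrow> nat \<Rightarrow> nat \<Rightarrow> real) \<Rightarrow> (nat \<times> nat \<times> nat) list \<Rightarrow> real" where
  "disc_sum \<gamma> r h = (\<Sum>t<length h. \<gamma> ^ t * (case h ! t of (s, a, s') \<Rightarrow> r s a s'))"

(* J(pi) = E[sum_t gamma^t r(s_t,a_t,s_{t+1})], as the limit of the expectations of
   the horizon-n truncations (monotone/dominated convergence; finite state space) *)
definition value_fn :: "(nat \<Rightarrow> nat \<Rightarrow> nat pmf) \<Rightarrow> nat pmf \<Rightarrow> real
     \<Rightarrow> (nat \<Rightarrow> nat \<Rightarrow> nat \<Rightarrow> real) \<Rightarrow> (nat \<Rightarrow> nat pmf) \<Rightarrow> real" where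
  "value_fn T I \<gamma> r \<pi> = lim (\<lambda>n. measure_pmf.expectation (traj T I \<pi> n) (\<lambda>(h, s). disc_sum \<gamma> r h))"

definition total_preorder_on :: "'x set \<Rightarrow> ('x \<times> 'x) set \<Rightarrow> bool" where
  "total_preorder_on X r \<longleftrightarrow> r \<subseteq> X \<times> X \<and> (\<forall>x\<in>X. (x, x) \<in> r) \<and> trans r \<and>
     (\<forall>x\<in>X. \<forall>y\<in>X. (x, y) \<in> r \<or> (y, x) \<in> r)"

definition Ord_FPR :: "nat set \<Rightarrow> nat set \<Rightarrow> ((nat \<Rightarrow> nat pmf) \<times> (nat \<Rightarrow> nat pmf)) set set" where
  "Ord_FPR S A = {ord. \<exists>J :: (nat \<Rightarrow> nat pmf) \<Rightarrow> real.
      ord = {(p1, p2). p1 \<in> policies S A \<and> p2 \<in> policies S A \<and> J p1 \<ge> J p2}}"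

(* Ord_GOMORL(E): reward vector R i (i < k), vectors in R^k as real lists of length k *)
definition Ord_GOMORL :: "nat set \<Rightarrow> nat set \<Rightarrow> (nat \<Rightarrow> nat \<Rightarrow> nat pmf) \<Rightarrow> nat pmf
      \<Rightarrow> ((nat \<Rightarrow> nat pmf) \<times> (nat \<Rightarrow> nat pmf)) set set" where
  "Ord_GOMORL S A T I = {ord. \<exists>(k::nat) (R :: nat \<Rightarrow> nat \<Rightarrow> nat \<Rightarrow> nat \<Rightarrow> real) (\<gamma>::real)
        (ordJ :: (real list \<times> real list) set).
      0 \<le> \<gamma> \<and> \<gamma> < 1 \<and> total_preorder_on {v. length v = k} ordJ \<and>
      ord = {(p1, p2). p1 \<in> policies S A \<and> p2 \<in> policies S A \<and>
               (map (\<lambda>i. value_fn T I \<gamma> (R i) p1) [0..<k],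
                map (\<lambda>i. value_fn T I \<gamma> (R i) p2) [0..<k]) \<in> ordJ}}"

end

theory Submission
  imports Defs
begin

text \<open>A GOMORL specification only sees a policy through the distribution of the trajectories it
generates. If some state can never be reached, two policies that differ only there generate the
same trajectories, so every GOMORL-induced preorder ranks them as equivalent; an arbitrary
function on policies, however, may rank one strictly above the other.\<close>

lemma traj_state_in_closed:
  assumes "set_pmf I \<subseteq> R" and "\<And>s a. s \<in> R \<Longrightarrow> set_pmf (T s a) \<subseteq> R"
  shows "x \<in> set_pmf (traj T I \<pi> n) \<Longrightarrow> snd x \<in> R"
proof (induction n arbitrary: x)
  case 0
  then show ?case using assms(1) by auto
next
  case (Suc n)
  then obtain h s a where "(h, s) \<in> set_pmf (traj T I \<pi> n)" and "snd x \<in> set_pmf (T s a)"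
    by (auto split: prod.splits)
  then show ?case using Suc.IH assms(2) by fastforce
qed

lemma traj_cong_closed:
  assumes "set_pmf I \<subseteq> R" and "\<And>s a. s \<in> R \<Longrightarrow> set_pmf (T s a) \<subseteq> R"
    and "\<And>s. s \<in> R \<Longrightarrow> \<pi> s = \<sigma> s"
  shows "traj T I \<pi> n = traj T I \<sigma> n"
proof (induction n)
  case 0
  show ?case by simp
next
  case (Suc n)
  show ?case
    unfolding traj.simps Suc
  proof (rule bind_pmf_cong[OF refl])
    fix x assume "x \<in> set_pmf (traj T I \<sigma> n)"
    with assms(1,2) have "snd x \<in> R" by (rule traj_state_in_closed[where T = T])
    then show "(case x of (h, s) \<Rightarrow> \<pi> s \<bind> (\<lambda>a. map_pmf (\<lambda>s'. (h @ [(s, a, s')], s')) (T s a))) =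
               (case x of (h, s) \<Rightarrow> \<sigma> s \<bind> (\<lambda>a. map_pmf (\<lambda>s'. (h @ [(s, a, s')], s')) (T s a)))"
      using assms(3) by (cases x) auto
  qed
qed

lemma value_fn_cong_closed:
  assumes "set_pmf I \<subseteq> R" and "\<And>s a. s \<in> R \<Longrightarrow> set_pmf (T s a) \<subseteq> R"
    and "\<And>s. s \<in> R \<Longrightarrow> \<pi> s = \<sigma> s"
  shows "value_fn T I \<gamma> r \<pi> = value_fn T I \<gamma> r \<sigma>"
  unfolding value_fn_def using traj_cong_closed[OF assms] by simp

lemma Ord_GOMORL_equal_values_related:
  assumes "ord \<in> Ord_GOMORL S A T I" and "\<pi> \<in> policies S A" and "\<sigma> \<in> policies S A"
    and "\<And>\<gamma> r. value_fn T I \<gamma> r \<pi> = value_fn T I \<gamma> r \<sigma>"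
  shows "(\<pi>, \<sigma>) \<in> ord"
proof -
  from assms(1) obtain k R \<gamma> ordJ where
    "total_preorder_on {v. length v = k} ordJ" and
    ord: "ord = {(p1, p2). p1 \<in> policies S A \<and> p2 \<in> policies S A \<and>
               (map (\<lambda>i. value_fn T I \<gamma> (R i) p1) [0..<k],
                map (\<lambda>i. value_fn T I \<gamma> (R i) p2) [0..<k]) \<in> ordJ}"
    unfolding Ord_GOMORL_def by blast
  then have "(map (\<lambda>i. value_fn T I \<gamma> (R i) \<sigma>) [0..<k],
              map (\<lambda>i. value_fn T I \<gamma> (R i) \<sigma>) [0..<k]) \<in> ordJ"
    unfolding total_preorder_on_def by simp
  then show ?thesis using ord assms(2-4) by simp
qed

lemma Ord_FPR_strict:
  assumes "\<pi> \<in> policies S A" and "\<sigma> \<in> policies S A" and "\<pi> \<noteq> \<sigma>"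
  defines "ord \<equiv> {(p1, p2). p1 \<in> policies S A \<and> p2 \<in> policies S A \<and>
                    (if p1 = \<pi> then 1 else 0 :: real) \<ge> (if p2 = \<pi> then 1 else 0)}"
  shows "ord \<in> Ord_FPR S A" and "total_preorder_on (policies S A) ord" and "(\<sigma>, \<pi>) \<notin> ord"
proof -
  show "ord \<in> Ord_FPR S A"
    unfolding Ord_FPR_def ord_def by (intro CollectI exI[of _ "\<lambda>p. if p = \<pi> then 1 else 0"]) (rule refl)
  show "total_preorder_on (policies S A) ord"
    unfolding total_preorder_on_def ord_def trans_def by auto
  show "(\<sigma>, \<pi>) \<notin> ord"
    using assms(3) unfolding ord_def by simp
qed

theorem mainTheorem16:
  shows "\<exists>S A T I (ord :: ((nat \<Rightarrow> nat pmf) \<times> (nat \<Rightarrow> nat pmf)) set).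
           is_env S A T I \<and> total_preorder_on (policies S A) ord \<and>
           ord \<in> Ord_FPR S A \<and> ord \<notin> Ord_GOMORL S A T I"
proof -
  define S :: "nat set" where "S = {0, 1}"
  define T :: "nat \<Rightarrow> nat \<Rightarrow> nat pmf" where "T = (\<lambda>s a. return_pmf 0)"
  define \<pi> :: "nat \<Rightarrow> nat pmf" where "\<pi> = (\<lambda>s. if s \<in> S then return_pmf 0 else undefined)"
  define \<sigma> :: "nat \<Rightarrow> nat pmf" where "\<sigma> = \<pi>(1 := return_pmf 1)"
  have env: "is_env S S T (return_pmf 0)"
    by (auto simp: is_env_def S_def T_def)
  have pols: "\<pi> \<in> policies S S" "\<sigma> \<in> policies S S"
    by (auto simp: policies_def \<pi>_def \<sigma>_def S_def)
  have "\<pi> 1 \<noteq> \<sigma> 1"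
    by (simp add: \<pi>_def \<sigma>_def S_def)
  then have "\<pi> \<noteq> \<sigma>" by metis
  then obtain ord where ord: "ord \<in> Ord_FPR S S" "total_preorder_on (policies S S) ord"
    and "(\<sigma>, \<pi>) \<notin> ord"
    using Ord_FPR_strict[OF pols] by blast
  have "value_fn T (return_pmf 0) \<gamma> r \<sigma> = value_fn T (return_pmf 0) \<gamma> r \<pi>" for \<gamma> r
    by (rule value_fn_cong_closed[where R = "{0}"]) (auto simp: T_def \<sigma>_def)
  then have "ord \<notin> Ord_GOMORL S S T (return_pmf 0)"
    using Ord_GOMORL_equal_values_related[OF _ pols(2,1)] \<open>(\<sigma>, \<pi>) \<notin> ord\<close> by blast
  then show ?thesis using env ord by blast
qed

end
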